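(* Let $X$ be a compact metric space and $T:X\to X$ a surjective local homeomorphism such that $Sp_l(X,T)$ is a finite set consisting of isolated points of $X$. Then \[{\rm dim}_{\rm am}(X,T)\le{\rm dim}_{\rm tow}(X,T).\]
   Context: $Sp_l(X,T)=\{x:|T^{-1}(\{x\})|\ge2\}$. For $n\in\mathbb{Z}$ and $x\in X$, $T^n(\{x\})$ is the image under $T^n$ if $n\ge0$ and the preimage under $T^{|n|}$ if $n<0$. $P_d(\mathbb{Z})$ is the set of probability measures on $\mathbb{Z}$ supported on at most $d+1$ points, with metric $\rho(\mu,\nu)=\sum_{m}|\mu(m)-\nu(m)|$ and $\mathbb{Z}$-action $\alpha_n(\mu)(m)=\mu(m-n)$. A map $\varphi:X\to P_d(\mathbb{Z})$ is $(E,\varepsilon)$-equivariant ($E\subseteq\mathbb{Z}$ finite, $\varepsilon>0$) if $\rho(\varphi(y),\alpha_n(\varphi(x)))<\varepsilon$ for all $n\in E$, $x\in X$, $y\in T^n(\{x\})$. ${\rm dim}_{\rm am}(X,T)$ is the least $d$ such that for every finite $E$ and $\varepsilon>0$ there is a continuous $(E,\varepsilon)$-equivariant $\varphi:X\to P_d(\mathbb{Z})$. Tower dimension ${\rm dim}_{\rm tow}(X,T)$: least $d$ such that for every finite $E\subseteq\mathbb{Z}$ there are finitely many pairs $(V_i,S_i)$, $V_i$ open, $S_i\subseteq\mathbb{N}$ finite, with $T^{-m}(\overline{V_i})\cap T^{-n}(\overline{V_i})=\varnothing$ for distinct $m,n\in S_i$ ($T^{-j}$ = preimage under $T^j$), the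 family $\{T^{-n}(V_i):n\in S_i\}$ partitionable into at most $d+1$ subfamilies of pairwise disjoint sets and covering $X$, and each $x$ lying in some $T^{-n}(V_i)$ with $n\in S_i$, $E+n\subseteq S_i$. Dimensions are $\infty$ if no such $d$ exists. *)

theory Defs
  imports "HOL-Analysis.Analysis" "HOL-Library.Extended_Nat"
begin

text \<open>The compact metric space X is the whole carrier of a type 'a of class metric_space.\<close>

definition local_homeo :: "('a::topological_space \<Rightarrow> 'a) \<Rightarrow> bool" where
  "local_homeo T \<longleftrightarrow> (\<forall>x. \<exists>U g. open U \<and> x \<in> U \<and> open (T ` U) \<and> homeomorphism U (T ` U) T g)"

definition Sp_l :: "('a \<Rightarrow> 'a) \<Rightarrow> 'a set" where
  "Sp_l T = {x. \<exists>y z. y \<noteq> z \<and> T y = x \<and> T z = x}"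

definition Tn :: "('a \<Rightarrow> 'a) \<Rightarrow> int \<Rightarrow> 'a \<Rightarrow> 'a set" where
  "Tn T n x = (if n \<ge> 0 then {(T ^^ nat n) x} else {y. (T ^^ nat (- n)) y = x})"

definition supp_int :: "(int \<Rightarrow> real) \<Rightarrow> int set" where
  "supp_int \<mu> = {m. \<mu> m \<noteq> 0}"

definition Pd :: "nat \<Rightarrow> (int \<Rightarrow> real) set" where
  "Pd d = {\<mu>. (\<forall>m. \<mu> m \<ge> 0) \<and> finite (supp_int \<mu>) \<and> card (supp_int \<mu>) \<le> d + 1
              \<and> (\<Sum>m\<in>supp_int \<mu>. \<mu> m) = 1}"

definition rho :: "(int \<Rightarrow> real) \<Rightarrow> (int \<Rightarrow> real) \<Rightarrow> real" where
  "rho \<mu> \<nu> = (\<Sum>m\<in>supp_int \<mu> \<union> supp_int \<nu>. \<bar>\<mu> m - \<nu> m\<bar>)"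

definition alpha :: "int \<Rightarrow> (int \<Rightarrow> real) \<Rightarrow> (int \<Rightarrow> real)" where
  "alpha n \<mu> = (\<lambda>m. \<mu> (m - n))"

definition equivariant_approx ::
  "('a \<Rightarrow> 'a) \<Rightarrow> int set \<Rightarrow> real \<Rightarrow> ('a \<Rightarrow> (int \<Rightarrow> real)) \<Rightarrow> bool" where
  "equivariant_approx T E \<epsilon> \<phi> \<longleftrightarrow>
     (\<forall>n\<in>E. \<forall>x. \<forall>y\<in>Tn T n x. rho (\<phi> y) (alpha n (\<phi> x)) < \<epsilon>)"

definition rho_continuous :: "('a::metric_space \<Rightarrow> (int \<Rightarrow> real)) \<Rightarrow> bool" where
  "rho_continuous \<phi> \<longleftrightarrow>
     (\<forall>x. \<forall>e>0. \<exists>\<delta>>0. \<forall>y. dist y x < \<delta> \<longrightarrow> rho (\<phi> y) (\<phi> x) < e)"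

definition am_ok :: "('a::metric_space \<Rightarrow> 'a) \<Rightarrow> nat \<Rightarrow> bool" where
  "am_ok T d \<longleftrightarrow> (\<forall>E \<epsilon>. finite E \<and> \<epsilon> > 0 \<longrightarrow>
      (\<exists>\<phi>. (\<forall>x. \<phi> x \<in> Pd d) \<and> rho_continuous \<phi> \<and> equivariant_approx T E \<epsilon> \<phi>))"

definition dim_am :: "('a::metric_space \<Rightarrow> 'a) \<Rightarrow> enat" where
  "dim_am T = (if \<exists>d. am_ok T d then enat (LEAST d. am_ok T d) else \<infinity>)"

text \<open>The family {T^{-n}(V i) : n \<in> S i}
  is treated as indexed by pairs (i,n); its partition into at most d+1 subfamilies of
  pairwise disjoint sets is given by a colouring c with values \<le> d.\<close>
definition tow_ok :: "('a::metric_space \<Rightarrow> 'a) \<Rightarrow> nat \<Rightarrow> bool" where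
  "tow_ok T d \<longleftrightarrow> (\<forall>E::int set. finite E \<longrightarrow>
     (\<exists>(N::nat) (V::nat \<Rightarrow> 'a set) (S::nat \<Rightarrow> nat set).
        (\<forall>i<N. open (V i) \<and> finite (S i)) \<and>
        (\<forall>i<N. \<forall>m\<in>S i. \<forall>n\<in>S i. m \<noteq> n \<longrightarrow>
            (T ^^ m) -` closure (V i) \<inter> (T ^^ n) -` closure (V i) = {}) \<and>
        (\<exists>c::nat \<Rightarrow> nat \<Rightarrow> nat.
            (\<forall>i<N. \<forall>n\<in>S i. c i n \<le> d) \<and>
            (\<forall>i<N. \<forall>n\<in>S i. \<forall>j<N. \<forall>m\<in>S j. (i, n) \<noteq> (j, m) \<and> c i n = c j m \<longrightarrow>
                (T ^^ n) -` V i \<inter> (T ^^ m) -` V j = {})) \<and>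
        (\<Union>i\<in>{..<N}. \<Union>n\<in>S i. (T ^^ n) -` V i) = UNIV \<and>
        (\<forall>x. \<exists>i<N. \<exists>n\<in>S i. x \<in> (T ^^ n) -` V i \<and> (\<forall>e\<in>E. e + int n \<in> int ` S i))))"

definition dim_tow :: "('a::metric_space \<Rightarrow> 'a) \<Rightarrow> enat" where
  "dim_tow T = (if \<exists>d. tow_ok T d then enat (LEAST d. tow_ok T d) else \<infinity>)"

end

theory Submission
  imports Defs
begin

text \<open>Take towers of colour number \<open>d + 1\<close> for \<open>E = {-L..L}\<close>. A Lebesgue number argument shrinks
  the open cover by the levels lying at distance at least \<open>L\<close> from both ends of their tower to
  a closed one, and Urysohn functions \<open>f i\<close> for the bases \<open>V i\<close> equal \<open>1\<close> on the shrunken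
  sets. Put at position \<open>-n\<close> the mass \<open>\<Sum>i. f i (T\<^sup>n x) * w i n\<close>, where \<open>w i n\<close> is the distance
  of \<open>n\<close> to the complement of \<open>S i\<close> divided by \<open>L\<close> and cut off at \<open>1\<close>, and normalise. The total
  mass is at least \<open>1\<close>; levels of one colour are disjoint, so at most \<open>d + 1\<close> positions carry
  mass; and passing from \<open>x\<close> to \<open>T\<^sup>k x\<close> changes at most \<open>2(d + 1)\<close> terms, each by at most
  \<open>k/L\<close>. Hence \<open>\<rho>(\<phi>(T\<^sup>k x), \<alpha>\<^sub>k \<phi>(x)) \<le> 4(d + 1)k/L\<close>, which is small for large \<open>L\<close>.\<close>

lemma continuous_on_funpow:
  fixes T :: "'a::topological_space \<Rightarrow> 'a"
  assumes "continuous_on UNIV T"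
  shows "continuous_on UNIV (T ^^ n)"
proof (induction n)
  case 0
  show ?case by (simp add: continuous_on_id)
next
  case (Suc n)
  have "continuous_on UNIV (T \<circ> (T ^^ n))"
    by (rule continuous_on_compose) (use Suc assms in \<open>auto intro: continuous_on_subset\<close>)
  then show ?case by simp
qed

lemma compact_space_closed_shrinking:
  fixes W :: "'j \<Rightarrow> 'a::metric_space set"
  assumes "compact (UNIV :: 'a set)" and "\<And>j. j \<in> J \<Longrightarrow> open (W j)" and "(\<Union>j\<in>J. W j) = UNIV"
  obtains K where "\<And>j. closed (K j)" "\<And>j. K j \<subseteq> W j" "(\<Union>j\<in>J. K j) = UNIV"
proof -
  obtain e where e: "0 < e" "\<And>x. \<exists>G \<in> W ` J. ball x e \<subseteq> G"
    using Heine_Borel_lemma[of UNIV "W ` J"] assms by auto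
  define K where "K j = (\<Inter>a \<in> - W j. {x. e \<le> dist x a})" for j
  show thesis
  proof
    show "closed (K j)" for j
      unfolding K_def by (intro closed_INT ballI closed_Collect_le continuous_intros)
    show "K j \<subseteq> W j" for j
      using e(1) unfolding K_def by force
    show "(\<Union>j\<in>J. K j) = UNIV"
    proof -
      have "x \<in> (\<Union>j\<in>J. K j)" for x
      proof -
        obtain j where "j \<in> J" "ball x e \<subseteq> W j" using e(2) by blast
        then show ?thesis unfolding K_def by (force simp: subset_iff not_less)
      qed
      then show ?thesis by blast
    qed
  qed
qed

lemma bump_function_compact_open:
  fixes C V :: "'a::metric_space set"
  assumes "compact C" "open V" "C \<subseteq> V"
  obtains f :: "'a \<Rightarrow> real" where "continuous_on UNIV f" "\<And>z. 0 \<le> f z" "\<And>z. f z \<le> 1"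
    "\<And>z. z \<in> C \<Longrightarrow> f z = 1" "\<And>z. f z \<noteq> 0 \<Longrightarrow> z \<in> V"
proof (cases "C = {} \<or> V = UNIV")
  case True
  show ?thesis
    by (rule that[of "\<lambda>_. if C = {} then 0 else 1"]) (use True in \<open>auto simp: continuous_on_const\<close>)
next
  case False
  then have "C \<noteq> {}" "- V \<noteq> {}" by auto
  have "continuous_on C (\<lambda>z. infdist z (- V))"
    by (intro continuous_intros)
  then obtain z0 where z0: "z0 \<in> C" "\<And>y. y \<in> C \<Longrightarrow> infdist z0 (- V) \<le> infdist y (- V)"
    using continuous_attains_inf[OF assms(1) \<open>C \<noteq> {}\<close>] by blast
  define \<delta> where "\<delta> = infdist z0 (- V)"
  have "\<delta> > 0"
    unfolding \<delta>_def using infdist_pos_not_in_closed[of "- V" z0] assms z0(1) \<open>- V \<noteq> {}\<close> by auto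
  show ?thesis
  proof (rule that[of "\<lambda>z. min 1 (infdist z (- V) / \<delta>)"])
    show "continuous_on UNIV (\<lambda>z. min 1 (infdist z (- V) / \<delta>))"
      using \<open>\<delta> > 0\<close> by (intro continuous_intros) auto
    show "0 \<le> min 1 (infdist z (- V) / \<delta>)" for z
      using \<open>\<delta> > 0\<close> by (simp add: infdist_nonneg)
    show "min 1 (infdist z (- V) / \<delta>) = 1" if "z \<in> C" for z
      using z0(2)[OF that] \<open>\<delta> > 0\<close> unfolding \<delta>_def[symmetric] by simp
    show "z \<in> V" if "min 1 (infdist z (- V) / \<delta>) \<noteq> 0" for z
      using that by (cases "z \<in> V") auto
  qed simp
qed

lemma sum_abs_normalize_diff_le:
  fixes a b :: "'i \<Rightarrow> real"
  assumes "finite M" "\<And>m. 0 \<le> a m" "\<And>m. 0 \<le> b m"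
    and "1 \<le> (\<Sum>m\<in>M. a m)" and "1 \<le> (\<Sum>m\<in>M. b m)"
  shows "(\<Sum>m\<in>M. \<bar>a m / (\<Sum>m\<in>M. a m) - b m / (\<Sum>m\<in>M. b m)\<bar>) \<le> 2 * (\<Sum>m\<in>M. \<bar>a m - b m\<bar>)"
proof -
  define A B D where "A = (\<Sum>m\<in>M. a m)" and "B = (\<Sum>m\<in>M. b m)" and "D = (\<Sum>m\<in>M. \<bar>a m - b m\<bar>)"
  have "A \<ge> 1" "B \<ge> 1" "D \<ge> 0" using assms(4,5) by (auto simp: A_def B_def D_def sum_nonneg)
  have "\<bar>B - A\<bar> \<le> D"
    using sum_abs[of "\<lambda>m. b m - a m" M]
    by (simp add: A_def B_def D_def sum_subtractf abs_minus_commute)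
  have termwise: "\<bar>a m / A - b m / B\<bar> \<le> \<bar>a m - b m\<bar> / A + b m * (\<bar>B - A\<bar> / (A * B))" for m
  proof -
    have "a m / A - b m / B = (a m - b m) / A + b m * ((B - A) / (A * B))"
      using \<open>A \<ge> 1\<close> \<open>B \<ge> 1\<close> by (simp add: field_simps)
    also have "\<bar>\<dots>\<bar> \<le> \<bar>a m - b m\<bar> / A + \<bar>b m * ((B - A) / (A * B))\<bar>"
      using \<open>A \<ge> 1\<close> by (simp add: abs_triangle_ineq[THEN order_trans])
    also have "\<bar>b m * ((B - A) / (A * B))\<bar> = b m * (\<bar>B - A\<bar> / (A * B))"
      using \<open>A \<ge> 1\<close> \<open>B \<ge> 1\<close> assms(3)[of m] by (simp add: abs_mult)
    finally show ?thesis .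
  qed
  have "(\<Sum>m\<in>M. \<bar>a m / A - b m / B\<bar>) \<le> (\<Sum>m\<in>M. \<bar>a m - b m\<bar> / A + b m * (\<bar>B - A\<bar> / (A * B)))"
    by (intro sum_mono termwise)
  also have "\<dots> = D / A + B * (\<bar>B - A\<bar> / (A * B))"
    by (simp add: sum.distrib sum_divide_distrib[symmetric] sum_distrib_right[symmetric] D_def B_def)
  also have "\<dots> = (D + \<bar>B - A\<bar>) / A"
    using \<open>A \<ge> 1\<close> \<open>B \<ge> 1\<close> by (simp add: field_simps)
  also have "\<dots> \<le> 2 * D"
    using \<open>\<bar>B - A\<bar> \<le> D\<close> \<open>A \<ge> 1\<close> \<open>D \<ge> 0\<close> by (simp add: divide_le_eq) (smt (verit) mult_le_cancel_left1)
  finally show ?thesis unfolding A_def B_def D_def .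
qed

lemma supp_alpha: "supp_int (alpha n \<mu>) = (\<lambda>m. m + n) ` supp_int \<mu>"
  unfolding supp_int_def alpha_def by (auto simp: image_iff) (metis diff_add_cancel)

locale tower_bumps =
  fixes T :: "'a::metric_space \<Rightarrow> 'a" and N :: nat and V :: "nat \<Rightarrow> 'a set"
    and S :: "nat \<Rightarrow> nat set" and c :: "nat \<Rightarrow> nat \<Rightarrow> nat" and d :: nat
    and f :: "nat \<Rightarrow> 'a \<Rightarrow> real" and L :: nat
  assumes continuous_T: "continuous_on UNIV T"
    and finite_S: "\<And>i. i < N \<Longrightarrow> finite (S i)"
    and colour_le: "\<And>i n. i < N \<Longrightarrow> n \<in> S i \<Longrightarrow> c i n \<le> d"
    and colour_disjoint: "\<And>i n j m x. i < N \<Longrightarrow> n \<in> S i \<Longrightarrow> j < N \<Longrightarrow> m \<in> S j \<Longrightarrow> (i, n) \<noteq> (j, m)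
              \<Longrightarrow> c i n = c j m \<Longrightarrow> (T ^^ n) x \<in> V i \<Longrightarrow> (T ^^ m) x \<in> V j \<Longrightarrow> False"
    and f_continuous: "\<And>i. continuous_on UNIV (f i)"
    and f_nonneg: "\<And>i x. 0 \<le> f i x" and f_le_one: "\<And>i x. f i x \<le> 1"
    and f_support: "\<And>i x. f i x \<noteq> 0 \<Longrightarrow> x \<in> V i"
    and L_pos: "0 < L"
    and cover: "\<And>x. \<exists>i<N. \<exists>n\<in>S i. f i ((T ^^ n) x) = 1 \<and> (\<forall>e\<in>{- int L..int L}. e + int n \<in> int ` S i)"
begin

text \<open>A point with \<open>(T ^^ n) x \<in> V i\<close> puts mass at position \<open>-n\<close>, so that \<open>T\<close> acts as the
  shift \<open>alpha 1\<close>.\<close>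

definition gaps :: "nat \<Rightarrow> real set" where
  "gaps i = real_of_int ` (- int ` S i)"

definition weight :: "nat \<Rightarrow> int \<Rightarrow> real" where
  "weight i m = min 1 (infdist (of_int (- m)) (gaps i) / real L)"

definition mass :: "'a \<Rightarrow> int \<Rightarrow> real" where
  "mass x m = (\<Sum>i<N. f i ((T ^^ nat (- m)) x) * weight i m)"

definition height :: nat where
  "height = Max (insert 0 (\<Union>i<N. S i))"

definition window :: "int set" where
  "window = {- int height..0}"

definition total_mass :: "'a \<Rightarrow> real" where
  "total_mass x = (\<Sum>m\<in>window. mass x m)"

definition phi :: "'a \<Rightarrow> int \<Rightarrow> real" where
  "phi x m = mass x m / total_mass x"

definition visits :: "'a \<Rightarrow> (nat \<times> nat) set" where
  "visits x = {(i, n). i < N \<and> n \<in> S i \<and> (T ^^ n) x \<in> V i}"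

lemma weight_nonneg: "0 \<le> weight i m"
  unfolding weight_def using L_pos by (simp add: infdist_nonneg)

lemma weight_eq_0:
  assumes "- m \<notin> int ` S i"
  shows "weight i m = 0"
proof -
  have "real_of_int (- m) \<in> gaps i" unfolding gaps_def using assms by blast
  then show ?thesis unfolding weight_def by simp
qed

lemma weight_lipschitz: "\<bar>weight i m - weight i m'\<bar> \<le> \<bar>real_of_int (m - m')\<bar> / real L"
proof -
  let ?g = "\<lambda>m. infdist (real_of_int (- m)) (gaps i)"
  have "\<bar>weight i m - weight i m'\<bar> \<le> \<bar>?g m / real L - ?g m' / real L\<bar>"
    unfolding weight_def by linarith
  also have "\<dots> = \<bar>?g m - ?g m'\<bar> / real L"
    by (simp add: diff_divide_distrib[symmetric])
  also have "\<dots> \<le> \<bar>real_of_int (m - m')\<bar> / real L"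
    using infdist_triangle_abs[of "real_of_int (- m)" "gaps i" "real_of_int (- m')"]
    by (intro divide_right_mono) (auto simp: dist_real_def)
  finally show ?thesis .
qed

lemma weight_eq_1:
  assumes "\<forall>e\<in>{- int L..int L}. e + int n \<in> int ` S i"
  shows "weight i (- int n) = 1"
proof -
  have "gaps i \<noteq> {}"
  proof -
    have "(-1::int) \<in> - int ` S i" by auto
    then show ?thesis unfolding gaps_def by blast
  qed
  have "real L \<le> dist (real n) a" if a: "a \<in> gaps i" for a
  proof -
    obtain z where z: "a = of_int z" "z \<in> - int ` S i"
      using a unfolding gaps_def by blast
    have "\<not> \<bar>z - int n\<bar> \<le> int L"
    proof
      assume "\<bar>z - int n\<bar> \<le> int L"
      then have "z - int n \<in> {- int L..int L}" by auto
      then have "(z - int n) + int n \<in> int ` S i" by (rule bspec[OF assms])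
      then show False using z(2) by simp
    qed
    then have "real L \<le> \<bar>real_of_int z - real n\<bar>"
      by (metis of_int_abs of_int_diff of_int_le_iff of_int_of_nat_eq linorder_not_le order_less_imp_le)
    then show ?thesis using z(1) by (simp add: dist_real_def abs_minus_commute)
  qed
  then have "real L \<le> infdist (real n) (gaps i)"
    using \<open>gaps i \<noteq> {}\<close> unfolding infdist_def by (auto intro: cINF_greatest)
  then show ?thesis unfolding weight_def using L_pos by simp
qed

lemma le_height: "i < N \<Longrightarrow> n \<in> S i \<Longrightarrow> n \<le> height"
  unfolding height_def using finite_S by (intro Max_ge) auto

lemma mass_nonneg: "0 \<le> mass x m"
  unfolding mass_def by (intro sum_nonneg mult_nonneg_nonneg f_nonneg weight_nonneg)

lemma mass_outside_window: "m \<notin> window \<Longrightarrow> mass x m = 0"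
  unfolding mass_def window_def
  by (intro sum.neutral ballI, simp) (use le_height in \<open>force intro: weight_eq_0\<close>)

lemma finite_window: "finite window"
  by (simp add: window_def)

lemma supp_mass_subset_window: "supp_int (mass x) \<subseteq> window"
  using mass_outside_window unfolding supp_int_def by blast

lemma finite_visits: "finite (visits x)"
  by (rule finite_subset[of _ "Sigma {..<N} S"]) (auto simp: visits_def finite_S)

lemma card_visits_le: "card (visits x) \<le> d + 1"
proof -
  have "inj_on (\<lambda>(i, n). c i n) (visits x)"
    by (rule inj_onI) (use colour_disjoint in \<open>fastforce simp: visits_def\<close>)
  moreover have "(\<lambda>(i, n). c i n) ` visits x \<subseteq> {..d}"
    using colour_le unfolding visits_def by auto
  ultimately have "card (visits x) \<le> card {..d}"
    by (intro card_inj_on_le) auto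
  then show ?thesis by simp
qed

lemma supp_mass_subset_visits: "supp_int (mass x) \<subseteq> (\<lambda>(i, n). - int n) ` visits x"
proof
  fix m assume "m \<in> supp_int (mass x)"
  then have "mass x m \<noteq> 0" unfolding supp_int_def by simp
  then obtain i where i: "i \<in> {..<N}" "f i ((T ^^ nat (- m)) x) * weight i m \<noteq> 0"
    unfolding mass_def by (rule sum.not_neutral_contains_not_neutral)
  then have "- m \<in> int ` S i" using weight_eq_0 by (metis mult_zero_right)
  then obtain n where n: "n \<in> S i" "- m = int n" by auto
  have "(T ^^ n) x \<in> V i" using i(2) f_support n(2) by (metis mult_eq_0_iff nat_int)
  then have "(i, n) \<in> visits x" using i(1) n(1) unfolding visits_def by auto
  then show "m \<in> (\<lambda>(i, n). - int n) ` visits x" using n(2) by force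
qed

lemma finite_supp_mass: "finite (supp_int (mass x))"
  using supp_mass_subset_visits finite_visits by (meson finite_imageI finite_subset)

lemma card_supp_mass_le: "card (supp_int (mass x)) \<le> d + 1"
proof -
  have "card (supp_int (mass x)) \<le> card ((\<lambda>(i, n). - int n) ` visits x)"
    using supp_mass_subset_visits finite_visits by (intro card_mono) auto
  also have "\<dots> \<le> card (visits x)" by (rule card_image_le[OF finite_visits])
  finally show ?thesis using card_visits_le[of x] by linarith
qed

lemma total_mass_ge_1: "1 \<le> total_mass x"
proof -
  obtain i n where i: "i < N" "n \<in> S i" "f i ((T ^^ n) x) = 1"
    and deep: "\<forall>e\<in>{- int L..int L}. e + int n \<in> int ` S i"
    using cover[of x] by blast
  have "1 = f i ((T ^^ nat (- (- int n))) x) * weight i (- int n)"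
    using i(3) weight_eq_1[OF deep] by simp
  also have "\<dots> \<le> mass x (- int n)"
    unfolding mass_def using i(1) by (intro member_le_sum mult_nonneg_nonneg f_nonneg weight_nonneg) auto
  also have "\<dots> \<le> total_mass x"
    unfolding total_mass_def using le_height[OF i(1,2)]
    by (intro member_le_sum mass_nonneg) (auto simp: window_def)
  finally show ?thesis .
qed

lemma phi_in_Pd: "phi x \<in> Pd d"
proof -
  have pos: "total_mass x > 0" using total_mass_ge_1[of x] by simp
  have supp: "supp_int (phi x) = supp_int (mass x)"
    using pos unfolding supp_int_def phi_def by auto
  have "(\<Sum>m\<in>supp_int (mass x). phi x m) = (\<Sum>m\<in>window. phi x m)"
    using supp_mass_subset_window finite_window
    by (intro sum.mono_neutral_left) (auto simp: supp_int_def phi_def)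
  also have "\<dots> = 1"
    unfolding phi_def sum_divide_distrib[symmetric] total_mass_def[symmetric] using pos by simp
  finally show ?thesis
    unfolding Pd_def using supp finite_supp_mass card_supp_mass_le mass_nonneg pos
    by (auto simp: phi_def)
qed

lemma phi_outside_window: "m \<notin> window \<Longrightarrow> phi x m = 0"
  using mass_outside_window unfolding phi_def by simp

lemma supp_phi_subset_window: "supp_int (phi x) \<subseteq> window"
  using phi_outside_window unfolding supp_int_def by blast

lemma continuous_on_phi: "continuous_on UNIV (\<lambda>x. phi x m)"
proof -
  have level: "continuous_on UNIV (\<lambda>x. f i ((T ^^ k) x))" for i k
    using continuous_on_compose2[OF f_continuous continuous_on_funpow[OF continuous_T]] by auto
  have mass: "continuous_on UNIV (\<lambda>x. mass x m)" for m
    unfolding mass_def by (intro continuous_intros level)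
  have "continuous_on UNIV total_mass"
    unfolding total_mass_def[abs_def] by (intro continuous_intros mass)
  moreover have "total_mass x \<noteq> 0" for x
    using total_mass_ge_1[of x] by simp
  ultimately show ?thesis
    unfolding phi_def by (intro continuous_intros mass) auto
qed

lemma rho_continuous_phi: "rho_continuous phi"
  unfolding rho_continuous_def
proof (intro allI impI)
  fix x :: 'a and e :: real assume "e > 0"
  define g where "g y = (\<Sum>m\<in>window. \<bar>phi y m - phi x m\<bar>)" for y
  have "continuous_on UNIV g" unfolding g_def by (intro continuous_intros continuous_on_phi)
  then obtain \<delta> where "\<delta> > 0" and \<delta>: "\<And>y. dist y x < \<delta> \<Longrightarrow> dist (g y) (g x) < e"
    using \<open>e > 0\<close> unfolding continuous_on_eq_continuous_at[OF open_UNIV] continuous_at_eps_delta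
    by blast
  have "rho (phi y) (phi x) \<le> g y" for y
    unfolding rho_def g_def using supp_phi_subset_window finite_window
    by (intro sum_mono2) auto
  moreover have "g y < e" if "dist y x < \<delta>" for y
    using \<delta>[OF that] by (simp add: g_def dist_real_def)
  ultimately show "\<exists>\<delta>>0. \<forall>y. dist y x < \<delta> \<longrightarrow> rho (phi y) (phi x) < e"
    using \<open>\<delta> > 0\<close> by (meson order_le_less_trans)
qed

lemma sum_mass_eq_total_mass:
  assumes "finite F" "window \<subseteq> F"
  shows "(\<Sum>m\<in>F. mass x m) = total_mass x"
  unfolding total_mass_def using assms mass_outside_window by (intro sum.mono_neutral_right) auto

lemma sum_mass_shifted_eq_total_mass:
  assumes "finite F" "(\<lambda>m. m + k) ` window \<subseteq> F"
  shows "(\<Sum>m\<in>F. mass x (m - k)) = total_mass x"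
proof -
  have "(\<Sum>m\<in>F. mass x (m - k)) = (\<Sum>m\<in>(\<lambda>m. m - k) ` F. mass x m)"
    by (simp add: sum.reindex inj_on_def)
  also have "\<dots> = total_mass x"
    using assms by (intro sum_mass_eq_total_mass) force+
  finally show ?thesis .
qed

lemma mass_iterate: "mass ((T ^^ k) x) m = (\<Sum>i<N. f i ((T ^^ nat (int k - m)) x) * weight i m)"
  unfolding mass_def
proof (rule sum.cong[OF refl])
  fix i
  show "f i ((T ^^ nat (- m)) ((T ^^ k) x)) * weight i m = f i ((T ^^ nat (int k - m)) x) * weight i m"
  proof (cases "m \<le> 0")
    case True
    have "(T ^^ nat (- m)) ((T ^^ k) x) = (T ^^ (nat (- m) + k)) x"
      by (simp add: funpow_add)
    also have "nat (- m) + k = nat (int k - m)" using True by simp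
    finally show ?thesis by simp
  next
    case False
    then have "- m \<notin> int ` S i" by auto
    then show ?thesis by (simp add: weight_eq_0)
  qed
qed

definition shift_defect :: "nat \<Rightarrow> 'a \<Rightarrow> int \<Rightarrow> nat \<Rightarrow> real" where
  "shift_defect k x m i = f i ((T ^^ nat (int k - m)) x) * \<bar>weight i m - weight i (m - int k)\<bar>"

definition shift_support :: "nat \<Rightarrow> 'a \<Rightarrow> (int \<times> nat) set" where
  "shift_support k x = (\<lambda>(i, n). (int k - int n, i)) ` visits x \<union> (\<lambda>(i, n). (- int n, i)) ` visits ((T ^^ k) x)"

lemma shift_defect_nonneg: "0 \<le> shift_defect k x m i"
  unfolding shift_defect_def by (intro mult_nonneg_nonneg f_nonneg) auto

lemma shift_defect_le: "shift_defect k x m i \<le> real k / real L"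
proof -
  have "\<bar>weight i m - weight i (m - int k)\<bar> \<le> real k / real L"
    using weight_lipschitz[of i m "m - int k"] by simp
  then show ?thesis
    unfolding shift_defect_def using f_nonneg f_le_one
    by (meson abs_ge_zero dual_order.trans mult_left_le_one_le)
qed

lemma mass_shift_diff_le: "\<bar>mass ((T ^^ k) x) m - mass x (m - int k)\<bar> \<le> (\<Sum>i<N. shift_defect k x m i)"
proof -
  have "mass ((T ^^ k) x) m - mass x (m - int k)
     = (\<Sum>i<N. f i ((T ^^ nat (int k - m)) x) * (weight i m - weight i (m - int k)))"
    unfolding mass_iterate by (simp add: mass_def sum_subtractf right_diff_distrib)
  also have "\<bar>\<dots>\<bar> \<le> (\<Sum>i<N. \<bar>f i ((T ^^ nat (int k - m)) x) * (weight i m - weight i (m - int k))\<bar>)"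
    by (rule sum_abs)
  also have "\<dots> = (\<Sum>i<N. shift_defect k x m i)"
    unfolding shift_defect_def using f_nonneg by (simp add: abs_mult)
  finally show ?thesis .
qed

lemma finite_shift_support: "finite (shift_support k x)"
  unfolding shift_support_def using finite_visits by auto

lemma card_shift_support_le: "card (shift_support k x) \<le> 2 * (d + 1)"
proof -
  have "card (shift_support k x) \<le> card (visits x) + card (visits ((T ^^ k) x))"
    unfolding shift_support_def
    by (rule order_trans[OF card_Un_le add_mono]) (auto intro: card_image_le finite_visits)
  then show ?thesis using card_visits_le[of x] card_visits_le[of "(T ^^ k) x"] by simp
qed

lemma shift_defect_support:
  assumes "i < N" "shift_defect k x m i \<noteq> 0"
  shows "(m, i) \<in> shift_support k x"
proof -
  define z where "z = (T ^^ nat (int k - m)) x"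
  have "f i z \<noteq> 0" and moved: "weight i m \<noteq> weight i (m - int k)"
    using assms(2) unfolding shift_defect_def z_def by auto
  from \<open>f i z \<noteq> 0\<close> have "z \<in> V i" by (rule f_support)
  show ?thesis
  proof (cases "weight i (m - int k) = 0")
    case False
    then have "- (m - int k) \<in> int ` S i" by (meson weight_eq_0)
    then obtain n where n: "n \<in> S i" "int k - m = int n" by auto
    then have "(T ^^ n) x = z" unfolding z_def by simp
    then have "(i, n) \<in> visits x" using \<open>z \<in> V i\<close> assms(1) n(1) unfolding visits_def by simp
    moreover have "(m, i) = (int k - int n, i)" using n(2) by simp
    ultimately show ?thesis unfolding shift_support_def by (intro UnI1 rev_image_eqI) auto
  next
    case True
    then have "weight i m \<noteq> 0" using moved by simp
    then have "- m \<in> int ` S i" by (meson weight_eq_0)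
    then obtain n where n: "n \<in> S i" "- m = int n" by auto
    then have "nat (int k - m) = n + k" by simp
    then have "(T ^^ n) ((T ^^ k) x) = z" unfolding z_def by (simp add: funpow_add)
    then have "(i, n) \<in> visits ((T ^^ k) x)"
      using \<open>z \<in> V i\<close> assms(1) n(1) unfolding visits_def by simp
    moreover have "(m, i) = (- int n, i)" using n(2) by simp
    ultimately show ?thesis unfolding shift_support_def by (intro UnI2 rev_image_eqI) auto
  qed
qed

lemma sum_mass_shift_diff_le:
  assumes "finite F"
  shows "(\<Sum>m\<in>F. \<bar>mass ((T ^^ k) x) m - mass x (m - int k)\<bar>) \<le> 2 * (d + 1) * (real k / real L)"
proof -
  have "(\<Sum>m\<in>F. \<bar>mass ((T ^^ k) x) m - mass x (m - int k)\<bar>) \<le> (\<Sum>m\<in>F. \<Sum>i<N. shift_defect k x m i)"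
    by (intro sum_mono mass_shift_diff_le)
  also have "\<dots> = (\<Sum>(m, i)\<in>(F \<times> {..<N}) \<inter> shift_support k x. shift_defect k x m i)"
    unfolding sum.cartesian_product using assms shift_defect_support
    by (intro sum.mono_neutral_right) auto
  also have "\<dots> \<le> (\<Sum>(m, i)\<in>shift_support k x. shift_defect k x m i)"
    using finite_shift_support shift_defect_nonneg by (intro sum_mono2) auto
  also have "\<dots> \<le> real (card (shift_support k x)) * (real k / real L)"
    using shift_defect_le by (intro sum_bounded_above) auto
  also have "\<dots> \<le> real (2 * (d + 1)) * (real k / real L)"
    using card_shift_support_le[of k x] by (intro mult_right_mono) (simp_all only: of_nat_le_iff, simp)
  finally show ?thesis by simp
qed

lemma sum_phi_shift_diff_le:
  assumes "finite F"
  shows "(\<Sum>m\<in>F. \<bar>phi ((T ^^ k) x) m - phi x (m - int k)\<bar>) \<le> 4 * (d + 1) * (real k / real L)"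
proof -
  define y where "y = (T ^^ k) x"
  define F' where "F' = F \<union> {- int height..int k}"
  have "finite F'" using assms unfolding F'_def by simp
  have total_y: "(\<Sum>m\<in>F'. mass y m) = total_mass y"
    using \<open>finite F'\<close> by (intro sum_mass_eq_total_mass) (auto simp: F'_def window_def)
  have total_x: "(\<Sum>m\<in>F'. mass x (m - int k)) = total_mass x"
    using \<open>finite F'\<close> by (intro sum_mass_shifted_eq_total_mass) (auto simp: F'_def window_def)
  have "(\<Sum>m\<in>F. \<bar>phi y m - phi x (m - int k)\<bar>) \<le> (\<Sum>m\<in>F'. \<bar>phi y m - phi x (m - int k)\<bar>)"
    using \<open>finite F'\<close> by (intro sum_mono2) (auto simp: F'_def)
  also have "\<dots> = (\<Sum>m\<in>F'. \<bar>mass y m / (\<Sum>m\<in>F'. mass y m)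
                              - mass x (m - int k) / (\<Sum>m\<in>F'. mass x (m - int k))\<bar>)"
    unfolding total_x total_y phi_def ..
  also have "\<dots> \<le> 2 * (\<Sum>m\<in>F'. \<bar>mass y m - mass x (m - int k)\<bar>)"
    using total_x total_y total_mass_ge_1
    by (intro sum_abs_normalize_diff_le \<open>finite F'\<close> mass_nonneg) auto
  also have "\<dots> \<le> 2 * (2 * (d + 1) * (real k / real L))"
    unfolding y_def by (intro mult_left_mono sum_mass_shift_diff_le \<open>finite F'\<close>) auto
  also have "\<dots> = 4 * (d + 1) * (real k / real L)"
    by (simp add: field_simps)
  finally show ?thesis unfolding y_def .
qed

lemma rho_phi_Tn_le:
  assumes "y \<in> Tn T n x"
  shows "rho (phi y) (alpha n (phi x)) \<le> 4 * (d + 1) * (real (nat \<bar>n\<bar>) / real L)"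
proof -
  define F where "F = supp_int (phi y) \<union> supp_int (alpha n (phi x))"
  have "finite F"
    unfolding F_def supp_alpha using phi_in_Pd unfolding Pd_def by auto
  have rho_eq: "rho (phi y) (alpha n (phi x)) = (\<Sum>m\<in>F. \<bar>phi y m - phi x (m - n)\<bar>)"
    unfolding rho_def F_def alpha_def ..
  show ?thesis
  proof (cases "n \<ge> 0")
    case True
    define k where "k = nat n"
    have "n = int k" "y = (T ^^ k) x"
      using assms True unfolding Tn_def k_def by simp_all
    then show ?thesis
      unfolding rho_eq using sum_phi_shift_diff_le[OF \<open>finite F\<close>, of k x] by simp
  next
    case False
    define k where "k = nat (- n)"
    have "n = - int k" "x = (T ^^ k) y"
      using assms False unfolding Tn_def k_def by simp_all
    have "(\<Sum>m\<in>F. \<bar>phi y m - phi x (m - n)\<bar>) = (\<Sum>m\<in>(\<lambda>m. m + int k) ` F. \<bar>phi x m - phi y (m - int k)\<bar>)"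
      unfolding \<open>n = - int k\<close> by (simp add: sum.reindex inj_on_def abs_minus_commute)
    also have "\<dots> \<le> 4 * (d + 1) * (real k / real L)"
      unfolding \<open>x = (T ^^ k) y\<close> using \<open>finite F\<close> by (intro sum_phi_shift_diff_le) simp
    finally show ?thesis unfolding rho_eq using \<open>n = - int k\<close> by simp
  qed
qed

end

lemma tow_okE:
  fixes T :: "'a::metric_space \<Rightarrow> 'a"
  assumes "tow_ok T d" "finite E"
  obtains N :: nat and V :: "nat \<Rightarrow> 'a set" and S :: "nat \<Rightarrow> nat set" and c :: "nat \<Rightarrow> nat \<Rightarrow> nat"
  where "\<And>i. i < N \<Longrightarrow> open (V i)" "\<And>i. i < N \<Longrightarrow> finite (S i)"
    "\<And>i n. i < N \<Longrightarrow> n \<in> S i \<Longrightarrow> c i n \<le> d"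
    "\<And>i n j m x. i < N \<Longrightarrow> n \<in> S i \<Longrightarrow> j < N \<Longrightarrow> m \<in> S j \<Longrightarrow> (i, n) \<noteq> (j, m)
       \<Longrightarrow> c i n = c j m \<Longrightarrow> (T ^^ n) x \<in> V i \<Longrightarrow> (T ^^ m) x \<in> V j \<Longrightarrow> False"
    "\<And>x. \<exists>i<N. \<exists>n\<in>S i. (T ^^ n) x \<in> V i \<and> (\<forall>e\<in>E. e + int n \<in> int ` S i)"
proof -
  obtain N :: nat and V :: "nat \<Rightarrow> 'a set" and S :: "nat \<Rightarrow> nat set" and c :: "nat \<Rightarrow> nat \<Rightarrow> nat"
  where H: "\<forall>i<N. open (V i) \<and> finite (S i)" "\<forall>i<N. \<forall>n\<in>S i. c i n \<le> d"
    "\<forall>i<N. \<forall>n\<in>S i. \<forall>j<N. \<forall>m\<in>S j. (i, n) \<noteq> (j, m) \<and> c i n = c j m \<longrightarrow>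
        (T ^^ n) -` V i \<inter> (T ^^ m) -` V j = {}"
    "\<forall>x. \<exists>i<N. \<exists>n\<in>S i. x \<in> (T ^^ n) -` V i \<and> (\<forall>e\<in>E. e + int n \<in> int ` S i)"
    using assms(1)[unfolded tow_ok_def, rule_format, OF assms(2)] by (elim exE conjE) (rule that)
  show thesis
  proof (rule that[of N V S c])
    show "\<And>i n j m x. i < N \<Longrightarrow> n \<in> S i \<Longrightarrow> j < N \<Longrightarrow> m \<in> S j \<Longrightarrow> (i, n) \<noteq> (j, m)
       \<Longrightarrow> c i n = c j m \<Longrightarrow> (T ^^ n) x \<in> V i \<Longrightarrow> (T ^^ m) x \<in> V j \<Longrightarrow> False"
      using H(3) by blast
  qed (use H(1,2,4) in auto)
qed

lemma tower_cover_compact_cores: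
  fixes T :: "'a::metric_space \<Rightarrow> 'a"
  assumes "compact (UNIV :: 'a set)" "continuous_on UNIV T"
    and open_V: "\<And>i. i < N \<Longrightarrow> open (V i)" and finite_S: "\<And>i. i < N \<Longrightarrow> finite (S i)"
    and cover: "\<And>x. \<exists>i<N. \<exists>n\<in>S i. (T ^^ n) x \<in> V i \<and> P i n"
  obtains C where "\<And>i. i < N \<Longrightarrow> compact (C i)" "\<And>i. C i \<subseteq> V i"
    "\<And>x. \<exists>i<N. \<exists>n\<in>S i. (T ^^ n) x \<in> C i \<and> P i n"
proof -
  define J where "J = {(i, n). i < N \<and> n \<in> S i \<and> P i n}"
  define W where "W = (\<lambda>(i, n). (T ^^ n) -` V i)"
  have "open (W j)" if "j \<in> J" for j
    using that open_V unfolding J_def W_def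
    by (auto intro!: open_vimage continuous_on_funpow assms(2))
  moreover have "(\<Union>j\<in>J. W j) = UNIV"
    using cover unfolding J_def W_def by fast
  ultimately obtain K where closed_K: "\<And>j. closed (K j)" and K_W: "\<And>j. K j \<subseteq> W j"
    and K_cover: "(\<Union>j\<in>J. K j) = UNIV"
    using compact_space_closed_shrinking[OF assms(1), of J W] by blast
  define C where "C i = (\<Union>n\<in>{n. (i, n) \<in> J}. (T ^^ n) ` K (i, n))" for i
  show thesis
  proof
    fix i assume "i < N"
    have "finite {n. (i, n) \<in> J}"
      using finite_S[OF \<open>i < N\<close>] by (rule finite_subset[rotated]) (auto simp: J_def)
    moreover have "compact ((T ^^ n) ` K (i, n))" for n
      using compact_Int_closed[OF assms(1) closed_K]
      by (intro compact_continuous_image continuous_on_subset[OF continuous_on_funpow[OF assms(2)]]) auto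
    ultimately show "compact (C i)" unfolding C_def by blast
  next
    show "C i \<subseteq> V i" for i
      unfolding C_def using K_W by (fastforce simp: W_def)
  next
    fix x
    have "x \<in> (\<Union>j\<in>J. K j)" using K_cover by simp
    then obtain i n where "(i, n) \<in> J" "x \<in> K (i, n)" by auto
    then have "(T ^^ n) x \<in> C i" unfolding C_def by blast
    then show "\<exists>i<N. \<exists>n\<in>S i. (T ^^ n) x \<in> C i \<and> P i n"
      using \<open>(i, n) \<in> J\<close> unfolding J_def by blast
  qed
qed

lemma tow_ok_tower_bumps:
  fixes T :: "'a::metric_space \<Rightarrow> 'a"
  assumes "compact (UNIV :: 'a set)" "continuous_on UNIV T" "tow_ok T d" "0 < L"
  obtains N V S c f where "tower_bumps T N V S c d f L"
proof -
  obtain N :: nat and V S c where open_V: "\<And>i. i < N \<Longrightarrow> open (V i)" and finite_S: "\<And>i. i < N \<Longrightarrow> finite (S i)"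
    and colour_le: "\<And>i n. i < N \<Longrightarrow> n \<in> S i \<Longrightarrow> c i n \<le> d"
    and colour_disjoint: "\<And>i n j m x. i < N \<Longrightarrow> n \<in> S i \<Longrightarrow> j < N \<Longrightarrow> m \<in> S j \<Longrightarrow> (i, n) \<noteq> (j, m)
       \<Longrightarrow> c i n = c j m \<Longrightarrow> (T ^^ n) x \<in> V i \<Longrightarrow> (T ^^ m) x \<in> V j \<Longrightarrow> False"
    and cover: "\<And>x. \<exists>i<N. \<exists>n\<in>S i. (T ^^ n) x \<in> V i \<and> (\<forall>e\<in>{- int L..int L}. e + int n \<in> int ` S i)"
    by (rule tow_okE[OF assms(3) finite_atLeastAtMost_int[of "- int L" "int L"]]) (rule that)
  obtain C where compact_C: "\<And>i. i < N \<Longrightarrow> compact (C i)" and C_V: "\<And>i. C i \<subseteq> V i"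
    and C_cover: "\<And>x. \<exists>i<N. \<exists>n\<in>S i. (T ^^ n) x \<in> C i \<and> (\<forall>e\<in>{- int L..int L}. e + int n \<in> int ` S i)"
    using tower_cover_compact_cores[OF assms(1,2) open_V finite_S cover] by blast
  have "\<exists>g. continuous_on UNIV g \<and> (\<forall>z. 0 \<le> g z \<and> g z \<le> (1::real))
          \<and> (i < N \<longrightarrow> (\<forall>z\<in>C i. g z = 1)) \<and> (\<forall>z. g z \<noteq> 0 \<longrightarrow> z \<in> V i)" for i
  proof (cases "i < N")
    case True
    then obtain g :: "'a \<Rightarrow> real" where "continuous_on UNIV g" "\<And>z. 0 \<le> g z" "\<And>z. g z \<le> 1"
      "\<And>z. z \<in> C i \<Longrightarrow> g z = 1" "\<And>z. g z \<noteq> 0 \<Longrightarrow> z \<in> V i"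
      using compact_C open_V C_V bump_function_compact_open by metis
    then show ?thesis by blast
  qed (intro exI[of _ "\<lambda>_. 0"], auto simp: continuous_on_const)
  then obtain f :: "nat \<Rightarrow> 'a \<Rightarrow> real" where f: "\<And>i. continuous_on UNIV (f i)" "\<And>i z. 0 \<le> f i z"
    "\<And>i z. f i z \<le> 1" "\<And>i z. i < N \<Longrightarrow> z \<in> C i \<Longrightarrow> f i z = 1" "\<And>i z. f i z \<noteq> 0 \<Longrightarrow> z \<in> V i"
    by metis
  have "tower_bumps T N V S c d f L"
  proof
    show "\<exists>i<N. \<exists>n\<in>S i. f i ((T ^^ n) x) = 1 \<and> (\<forall>e\<in>{- int L..int L}. e + int n \<in> int ` S i)" for x
      using C_cover[of x] f(4) by blast
  qed (fact assms(2,4) finite_S colour_le colour_disjoint f)+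
  then show thesis by (rule that)
qed

lemma tow_ok_imp_am_ok:
  fixes T :: "'a::metric_space \<Rightarrow> 'a"
  assumes "compact (UNIV :: 'a set)" "continuous_on UNIV T" "tow_ok T d"
  shows "am_ok T d"
  unfolding am_ok_def
proof (intro allI impI, elim conjE)
  fix E :: "int set" and \<epsilon> :: real
  assume "finite E" "\<epsilon> > 0"
  define K where "K = Max (insert 0 ((\<lambda>n. nat \<bar>n\<bar>) ` E))"
  have K: "nat \<bar>n\<bar> \<le> K" if "n \<in> E" for n
    unfolding K_def using \<open>finite E\<close> that by (intro Max_ge) auto
  define L where "L = nat \<lceil>4 * (real d + 1) * real K / \<epsilon>\<rceil> + 1"
  have "0 < L" unfolding L_def by simp
  have "4 * (real d + 1) * real K / \<epsilon> < real L" unfolding L_def by linarith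
  then have L_large: "4 * (real d + 1) * (real K / real L) < \<epsilon>"
    using \<open>\<epsilon> > 0\<close> \<open>0 < L\<close> by (simp add: field_simps)
  obtain N V S c f where "tower_bumps T N V S c d f L"
    by (rule tow_ok_tower_bumps[OF assms \<open>0 < L\<close>])
  then interpret tower_bumps T N V S c d f L .
  have "rho (phi y) (alpha n (phi x)) < \<epsilon>" if "n \<in> E" "y \<in> Tn T n x" for n x y
  proof -
    have "rho (phi y) (alpha n (phi x)) \<le> 4 * (d + 1) * (real (nat \<bar>n\<bar>) / real L)"
      by (rule rho_phi_Tn_le[OF that(2)])
    also have "\<dots> \<le> 4 * (d + 1) * (real K / real L)"
      using K[OF that(1)] by (intro mult_left_mono divide_right_mono) auto
    also have "\<dots> < \<epsilon>" using L_large by (simp add: add.commute)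
    finally show ?thesis .
  qed
  then show "\<exists>\<phi>. (\<forall>x. \<phi> x \<in> Pd d) \<and> rho_continuous \<phi> \<and> equivariant_approx T E \<epsilon> \<phi>"
    using phi_in_Pd rho_continuous_phi unfolding equivariant_approx_def by blast
qed

lemma dim_am_le_dim_tow_of_imp:
  fixes T :: "'a::metric_space \<Rightarrow> 'a"
  assumes "\<And>d. tow_ok T d \<Longrightarrow> am_ok T d"
  shows "dim_am T \<le> dim_tow T"
proof (cases "\<exists>d. tow_ok T d")
  case True
  define d where "d = (LEAST d. tow_ok T d)"
  have "tow_ok T d" unfolding d_def using True by (rule LeastI_ex)
  then have "am_ok T d" by (rule assms)
  then have "dim_am T \<le> enat d" unfolding dim_am_def by (auto intro: Least_le)
  also have "enat d = dim_tow T" unfolding dim_tow_def d_def using True by simp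
  finally show ?thesis .
qed (simp add: dim_tow_def)

lemma local_homeo_imp_continuous_on:
  fixes T :: "'a::t2_space \<Rightarrow> 'a"
  assumes "local_homeo T"
  shows "continuous_on UNIV T"
proof -
  have "isCont T x" for x
  proof -
    obtain U g where "open U" "x \<in> U" "homeomorphism U (T ` U) T g"
      using assms unfolding local_homeo_def by blast
    then show ?thesis
      using homeomorphism_cont1 continuous_on_eq_continuous_at by blast
  qed
  then show ?thesis by (simp add: continuous_at_imp_continuous_on)
qed

theorem lemma5p7:
  fixes T :: "'a::metric_space \<Rightarrow> 'a"
  assumes "compact (UNIV :: 'a set)"
    and "surj T"
    and "local_homeo T"
    and "finite (Sp_l T)"
    and "\<forall>x\<in>Sp_l T. \<not> x islimpt (UNIV :: 'a set)"
  shows "dim_am T \<le> dim_tow T"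
  using tow_ok_imp_am_ok[OF assms(1) local_homeo_imp_continuous_on[OF assms(3)]]
  by (rule dim_am_le_dim_tow_of_imp)

end
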